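(* Let $c_{a,1}>0$ and $c_{c,1}>0$ be constants, let $r_{a,1}:(0,\infty)\to(0,\infty)$ be a positive, decreasing, at least twice continuously differentiable function, and let $r_{c,1}:(0,\infty)\to(0,\infty)$ be a positive, increasing, at least twice continuously differentiable function. Assume $$c_{a,1}\,r_{a,1}''(n)+c_{c,1}\,r_{c,1}''(n)>0\quad\text{for all } n\in(0,\infty),$$ and assume there exists $\bar n_1\in(0,\infty)$ such that $$c_{a,1}\,r_{a,1}'(\bar n_1)+c_{c,1}\,r_{c,1}'(\bar n_1)=0.$$ For each real budget $p\ge 2$ define $u_1:[1,p-1]\to(0,\infty)$, $u_1(n_1)=\frac{1}{p-n_1}\big(c_{a,1}r_{a,1}(n_1)+c_{c,1}r_{c,1}(n_1)\big)$, and let $n_1^*=n_1^*(p)$ be its unique global minimizer on $[1,p-1]$. Then $\bar n_1$ is unique, and for every budget $p$, $$n_1^*\le \max\{1,\bar n_1\},$$ a bound independent of $p$.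
   Context: Under the stated hypotheses, $u_1$ has a unique global minimizer on $[1,p-1]$ for every $p\ge 2$; $n_1^*$ denotes this minimizer. The functions $r_{a,1}$, $r_{c,1}$ model accuracy and evaluation-cost rates of a low-fidelity model trained with $n_1$ high-fidelity samples. *)

theory Defs
  imports Complex_Main
begin

definition u1 :: "real \<Rightarrow> real \<Rightarrow> (real \<Rightarrow> real) \<Rightarrow> (real \<Rightarrow> real) \<Rightarrow> real \<Rightarrow> real \<Rightarrow> real" where
  "u1 ca cc ra rc p n = (ca * ra n + cc * rc n) / (p - n)"

definition is_global_min_u1 :: "real \<Rightarrow> real \<Rightarrow> (real \<Rightarrow> real) \<Rightarrow> (real \<Rightarrow> real) \<Rightarrow> real \<Rightarrow> real \<Rightarrow> bool" where
  "is_global_min_u1 ca cc ra rc p n \<longleftrightarrow>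
     n \<in> {1..p-1} \<and> (\<forall>m\<in>{1..p-1}. u1 ca cc ra rc p n \<le> u1 ca cc ra rc p m)"

end

theory Submission
  imports Defs
begin

text \<open>The derivative \<open>g = c\<^sub>a r\<^sub>a' + c\<^sub>c r\<^sub>c'\<close> of the total cost \<open>f = c\<^sub>a r\<^sub>a + c\<^sub>c r\<^sub>c\<close>
  is strictly increasing, because \<open>g' > 0\<close>; hence it vanishes at most once, namely at \<open>nbar\<close>,
  and \<open>f\<close> is strictly increasing on \<open>[nbar, \<infinity>)\<close>. Beyond \<open>m = max 1 nbar\<close> the objective
  \<open>f(n) / (p - n)\<close> therefore has a larger numerator and a smaller positive denominator than
  at \<open>m\<close>, so no minimizer can lie to the right of \<open>m\<close>.\<close>

lemma strict_mono_on_atLeast_if_deriv_pos: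
  fixes f f' :: "real \<Rightarrow> real"
  assumes deriv: "\<And>x. a \<le> x \<Longrightarrow> (f has_real_derivative f' x) (at x)"
    and pos: "\<And>x. a < x \<Longrightarrow> 0 < f' x"
  shows "strict_mono_on {a..} f"
proof (rule strict_mono_onI)
  fix x y assume x: "x \<in> {a..}" and "x < y"
  have "continuous_on {x..y} f"
  proof (rule continuous_at_imp_continuous_on, rule ballI)
    fix z assume "z \<in> {x..y}"
    with x show "isCont f z"
      by (intro DERIV_isCont[of f "f' z"] deriv) auto
  qed
  moreover have "(f has_real_derivative f' z) (at z) \<and> 0 < f' z" if "x < z" for z
    using x that by (intro conjI deriv pos) auto
  ultimately show "f x < f y"
    using DERIV_pos_imp_increasing_open[OF \<open>x < y\<close>] by blast
qed

lemma strict_mono_on_greaterThan_if_deriv_pos: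
  fixes f f' :: "real \<Rightarrow> real"
  assumes "\<And>x. a < x \<Longrightarrow> (f has_real_derivative f' x) (at x)"
    and "\<And>x. a < x \<Longrightarrow> 0 < f' x"
  shows "strict_mono_on {a<..} f"
proof (rule strict_mono_onI)
  fix x y assume "x \<in> {a<..}" "y \<in> {a<..}" "x < y"
  then have "strict_mono_on {x..} f"
    using assms by (intro strict_mono_on_atLeast_if_deriv_pos[where f' = f']) auto
  from strict_mono_onD[OF this, of x y] show "f x < f y"
    using \<open>x < y\<close> by simp
qed

lemma global_min_u1_le_if_cost_strict_mono:
  assumes min: "is_global_min_u1 ca cc ra rc p n"
    and "1 \<le> b"
    and mono: "strict_mono_on {b..} (\<lambda>x. ca * ra x + cc * rc x)"
    and nonneg: "0 \<le> ca * ra b + cc * rc b"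
  shows "n \<le> b"
proof (rule ccontr)
  assume "\<not> n \<le> b"
  have n_range: "n \<le> p - 1" and b_range: "b \<in> {1..p-1}"
    using min \<open>1 \<le> b\<close> \<open>\<not> n \<le> b\<close> by (auto simp: is_global_min_u1_def)
  have "ca * ra b + cc * rc b < ca * ra n + cc * rc n"
    using strict_mono_onD[OF mono, of b n] \<open>\<not> n \<le> b\<close> by auto
  then have "u1 ca cc ra rc p b < u1 ca cc ra rc p n"
    unfolding u1_def using nonneg n_range \<open>\<not> n \<le> b\<close> by (intro frac_less) auto
  with min b_range show False
    by (auto simp: is_global_min_u1_def not_le[symmetric])
qed

theorem proposition2:
  fixes ca cc :: real
    and ra ra' ra'' rc rc' rc'' :: "real \<Rightarrow> real"
    and nbar :: real
  assumes ca_pos: "ca > 0" and cc_pos: "cc > 0"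
    and ra_pos: "\<And>x. x > 0 \<Longrightarrow> ra x > 0"
    and ra_decr: "\<And>x y. 0 < x \<Longrightarrow> x \<le> y \<Longrightarrow> ra y \<le> ra x"
    and ra_d1: "\<And>x. x > 0 \<Longrightarrow> (ra has_real_derivative ra' x) (at x)"
    and ra_d2: "\<And>x. x > 0 \<Longrightarrow> (ra' has_real_derivative ra'' x) (at x)"
    and ra_C2: "continuous_on {0<..} ra''"
    and rc_pos: "\<And>x. x > 0 \<Longrightarrow> rc x > 0"
    and rc_incr: "\<And>x y. 0 < x \<Longrightarrow> x \<le> y \<Longrightarrow> rc x \<le> rc y"
    and rc_d1: "\<And>x. x > 0 \<Longrightarrow> (rc has_real_derivative rc' x) (at x)"
    and rc_d2: "\<And>x. x > 0 \<Longrightarrow> (rc' has_real_derivative rc'' x) (at x)"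
    and rc_C2: "continuous_on {0<..} rc''"
    and convex: "\<And>x. x > 0 \<Longrightarrow> ca * ra'' x + cc * rc'' x > 0"
    and nbar_pos: "nbar > 0"
    and nbar_crit: "ca * ra' nbar + cc * rc' nbar = 0"
  shows "(\<forall>m. m > 0 \<and> ca * ra' m + cc * rc' m = 0 \<longrightarrow> m = nbar) \<and>
         (\<forall>p n. p \<ge> 2 \<and> is_global_min_u1 ca cc ra rc p n \<longrightarrow> n \<le> max 1 nbar)"
proof -
  define f where "f x = ca * ra x + cc * rc x" for x
  define g where "g x = ca * ra' x + cc * rc' x" for x
  have f_deriv: "(f has_real_derivative g x) (at x)" if "x > 0" for x
    unfolding f_def g_def using ra_d1[OF that] rc_d1[OF that] by (auto intro!: derivative_eq_intros)
  have "(g has_real_derivative ca * ra'' x + cc * rc'' x) (at x)" if "x > 0" for x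
    unfolding g_def using ra_d2[OF that] rc_d2[OF that] by (auto intro!: derivative_eq_intros)
  then have g_mono: "strict_mono_on {0<..} g"
    using convex by (rule strict_mono_on_greaterThan_if_deriv_pos)
  have g_nbar: "g nbar = 0"
    using nbar_crit by (simp add: g_def)
  have "g x > 0" if "nbar < x" for x
    using strict_mono_onD[OF g_mono, of nbar x] that nbar_pos g_nbar by simp
  then have "strict_mono_on {nbar..} f"
    using f_deriv nbar_pos by (intro strict_mono_on_atLeast_if_deriv_pos[where f' = g]) auto
  then have f_mono: "strict_mono_on {max 1 nbar..} f"
    by (rule monotone_on_subset) auto
  have "0 < max 1 nbar"
    by (simp add: less_max_iff_disj)
  then have f_nonneg: "0 \<le> f (max 1 nbar)"
    unfolding f_def
    by (intro add_nonneg_nonneg mult_nonneg_nonneg less_imp_le ca_pos cc_pos ra_pos rc_pos)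
  have "m = nbar" if "m > 0" "g m = 0" for m
    using inj_onD[OF strict_mono_on_imp_inj_on[OF g_mono], of m nbar] that nbar_pos g_nbar
    by simp
  moreover have "n \<le> max 1 nbar" if "is_global_min_u1 ca cc ra rc p n" for p n
    using global_min_u1_le_if_cost_strict_mono[OF that _ f_mono[unfolded f_def]]
      f_nonneg[unfolded f_def] by simp
  ultimately show ?thesis
    by (auto simp: g_def)
qed

end
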